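(* Let $G$ be a finite simple graph with vertices ordered as $V(G)=\{u_1,\dots,u_n\}$, and let $\widehat{G}$ be the graph constructed from $G$ and this ordering as follows: $V(\widehat{G})=\{(u_i,u_j)\,:\,1\le i<j\le n,\ u_iu_j\in E(G)\}$, and two distinct vertices $(u_i,u_j)$ and $(u_k,u_l)$ of $\widehat{G}$ with $j\le l$ are adjacent if and only if $i=k$, or $j=k$, or ($j=l$ and $u_iu_k\notin E(G)$). Then \[ h^*(G,x)=I(\widehat{G},x). \] Moreover, if $e=u_{n-1}u_n\in E(G)$, then $\widehat{G-e}$ (constructed from $G-e$ with the same vertex ordering) is a subgraph of $\widehat{G}$.
   Context: For a graph $G$ on $n$ vertices, let $a_k(G)$ denote the number of partitions of $V(G)$ into exactly $k$ parts each of which induces a complete subgraph of $G$. The adjoint polynomial is $h(G,x)=\sum_{k=1}^n(-1)^{n-k}a_k(G)x^k$, and $h^*(G,x)=x^n h(G,1/x)=\sum_{k=0}^{n-1}(-1)^k a_{n-k}(G)x^k$. For a graph $H$, the independence polynomial is $I(H,x)=\sum_{k\ge 0}(-1)^k i_k(H)x^k$, where $i_k(H)$ is the number of independent sets of size $k$ in $H$ (with $i_0(H)=1$). $G-e$ denotes the graph obtained from $G$ by deleting the edge $e$. *)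

theory Defs
  imports Main "HOL-Library.Disjoint_Sets" "HOL-Computational_Algebra.Polynomial"
begin

text \<open>A finite simple graph with vertices ordered u_1,...,u_n is represented by
  its vertex set {1..n} (vertex i stands for u_i) and a symmetric irreflexive
  adjacency relation E supported on {1..n}.\<close>

definition simple_graph :: "nat \<Rightarrow> (nat \<Rightarrow> nat \<Rightarrow> bool) \<Rightarrow> bool" where
  "simple_graph n E \<longleftrightarrow>
     (\<forall>a b. E a b \<longrightarrow> E b a) \<and> (\<forall>a. \<not> E a a) \<and>
     (\<forall>a b. E a b \<longrightarrow> a \<in> {1..n} \<and> b \<in> {1..n})"

definition clique_partitions :: "nat \<Rightarrow> (nat \<Rightarrow> nat \<Rightarrow> bool) \<Rightarrow> nat \<Rightarrow> nat set set set" where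
  "clique_partitions n E k =
     {P. partition_on {1..n} P \<and> card P = k \<and>
         (\<forall>B\<in>P. \<forall>a\<in>B. \<forall>b\<in>B. a \<noteq> b \<longrightarrow> E a b)}"

definition a_coeff :: "nat \<Rightarrow> (nat \<Rightarrow> nat \<Rightarrow> bool) \<Rightarrow> nat \<Rightarrow> nat" where
  "a_coeff n E k = card (clique_partitions n E k)"

definition h_star :: "nat \<Rightarrow> (nat \<Rightarrow> nat \<Rightarrow> bool) \<Rightarrow> int poly" where
  "h_star n E = (\<Sum>k<n. monom ((-1)^k * int (a_coeff n E (n - k))) k)"

definition indep_sets :: "'v set \<Rightarrow> ('v \<Rightarrow> 'v \<Rightarrow> bool) \<Rightarrow> nat \<Rightarrow> 'v set set" where
  "indep_sets V A k = {S. S \<subseteq> V \<and> card S = k \<and> (\<forall>x\<in>S. \<forall>y\<in>S. \<not> A x y)}"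

definition indep_poly :: "'v set \<Rightarrow> ('v \<Rightarrow> 'v \<Rightarrow> bool) \<Rightarrow> int poly" where
  "indep_poly V A = (\<Sum>k\<le>card V. monom ((-1)^k * int (card (indep_sets V A k))) k)"

definition hat_V :: "nat \<Rightarrow> (nat \<Rightarrow> nat \<Rightarrow> bool) \<Rightarrow> (nat \<times> nat) set" where
  "hat_V n E = {(i, j). 1 \<le> i \<and> i < j \<and> j \<le> n \<and> E i j}"

definition hat_cond :: "(nat \<Rightarrow> nat \<Rightarrow> bool) \<Rightarrow> nat \<times> nat \<Rightarrow> nat \<times> nat \<Rightarrow> bool" where
  "hat_cond E p q = (case p of (i, j) \<Rightarrow> case q of (k, l) \<Rightarrow>
       i = k \<or> j = k \<or> (j = l \<and> \<not> E i k))"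

definition hat_adj :: "(nat \<Rightarrow> nat \<Rightarrow> bool) \<Rightarrow> nat \<times> nat \<Rightarrow> nat \<times> nat \<Rightarrow> bool" where
  "hat_adj E p q \<longleftrightarrow> p \<noteq> q \<and>
     (if snd p \<le> snd q then hat_cond E p q else hat_cond E q p)"

definition del_edge :: "(nat \<Rightarrow> nat \<Rightarrow> bool) \<Rightarrow> nat \<Rightarrow> nat \<Rightarrow> nat \<Rightarrow> nat \<Rightarrow> bool" where
  "del_edge E a b = (\<lambda>x y. E x y \<and> {x, y} \<noteq> {a, b})"

end

theory Submission
  imports Defs
begin

text \<open>
  Encode a partition of \<open>{1..n}\<close> by joining every element of a block other than the block's
  maximum to that maximum. This is a bijection between partitions and "star forests" (sets of
  pairs \<open>i < j\<close> in which every \<open>i\<close> has at most one \<open>j\<close> and no \<open>j\<close> is itself an \<open>i\<close>), and a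
  partition with \<open>k\<close> blocks yields \<open>n - k\<close> pairs. The adjacency of \<open>\<widehat>G\<close> forbids exactly the
  configurations excluded in a star forest of cliques: a common head (\<open>i = k\<close>), a chain
  (\<open>j = k\<close>), and two non-adjacent leaves of one star (\<open>j = l\<close>, \<open>u\<^sub>iu\<^sub>k \<notin> E\<close>). Hence
  \<open>a\<^sub>n\<^sub>-\<^sub>k(G) = i\<^sub>k(\<widehat>G)\<close>. Deleting an edge at \<open>u\<^sub>n\<close> only affects the last clause, which concerns
  leaves below a common maximum and so never involves \<open>u\<^sub>n\<close>.
\<close>

definition hat_of_partition :: "'a::linorder set set \<Rightarrow> ('a \<times> 'a) set" where
  "hat_of_partition P = (\<Union>B\<in>P. (\<lambda>i. (i, Max B)) ` (B - {Max B}))"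

definition partition_of_hat :: "'a set \<Rightarrow> ('a \<times> 'a) set \<Rightarrow> 'a set set" where
  "partition_of_hat A S = (\<lambda>j. insert j {i. (i, j) \<in> S}) ` {j \<in> A. \<forall>l. (j, l) \<notin> S}"

definition star_forest :: "'a::linorder set \<Rightarrow> ('a \<times> 'a) set \<Rightarrow> bool" where
  "star_forest A S \<longleftrightarrow> S \<subseteq> {(i, j). i \<in> A \<and> j \<in> A \<and> i < j} \<and>
     (\<forall>i j l. (i, j) \<in> S \<longrightarrow> (i, l) \<in> S \<longrightarrow> j = l) \<and>
     (\<forall>i j l. (i, j) \<in> S \<longrightarrow> (j, l) \<notin> S)"

lemma mem_hat_of_partition:
  "(i, j) \<in> hat_of_partition P \<longleftrightarrow> (\<exists>B\<in>P. i \<in> B \<and> i \<noteq> Max B \<and> j = Max B)"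
  by (auto simp: hat_of_partition_def)

lemma partition_on_block_eq:
  assumes "partition_on A P" "B \<in> P" "C \<in> P" "x \<in> B" "x \<in> C"
  shows "B = C"
  using disjointD[OF partition_onD2[OF assms(1)] assms(2,3)] assms(4,5) by blast

lemma partition_on_block_Max:
  assumes "finite A" "partition_on A P" "B \<in> P"
  shows "Max B \<in> B" "\<And>x. x \<in> B \<Longrightarrow> x \<le> Max B" "B \<subseteq> A"
proof -
  show sub: "B \<subseteq> A" using partition_onD1[OF assms(2)] assms(3) by blast
  have "finite B" "B \<noteq> {}"
    using finite_subset[OF sub assms(1)] partition_onD3[OF assms(2)] assms(3) by auto
  then show "Max B \<in> B" "\<And>x. x \<in> B \<Longrightarrow> x \<le> Max B" by simp_all
qed

lemma partition_on_Max_mem_iff: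
  assumes "finite A" "partition_on A P" "B \<in> P" "C \<in> P"
  shows "Max B \<in> C \<longleftrightarrow> B = C"
  using partition_on_block_Max(1)[OF assms(1,2)] partition_on_block_eq[OF assms(2)] assms(3,4)
  by blast

lemma inj_on_Max_partition_on:
  assumes "finite A" "partition_on A P"
  shows "inj_on Max P"
  using partition_on_Max_mem_iff[OF assms] partition_on_block_Max(1)[OF assms] by (metis inj_onI)

lemma star_forest_hat_of_partition:
  assumes "finite A" "partition_on A P"
  shows "star_forest A (hat_of_partition P)"
proof -
  note Max_facts = partition_on_block_Max[OF assms]
  note block_eq = partition_on_block_eq[OF assms(2)]
  have "hat_of_partition P \<subseteq> {(i, j). i \<in> A \<and> j \<in> A \<and> i < j}"
  proof
    fix x assume "x \<in> hat_of_partition P"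
    then obtain B i where "B \<in> P" "i \<in> B" "i \<noteq> Max B" "x = (i, Max B)"
      by (auto simp: hat_of_partition_def)
    then show "x \<in> {(i, j). i \<in> A \<and> j \<in> A \<and> i < j}"
      using Max_facts[of B] by (force simp: order_less_le)
  qed
  moreover have "j = l" if "(i, j) \<in> hat_of_partition P" "(i, l) \<in> hat_of_partition P" for i j l
    using that unfolding mem_hat_of_partition by (metis block_eq)
  moreover have "(j, l) \<notin> hat_of_partition P" if "(i, j) \<in> hat_of_partition P" for i j l
    using that unfolding mem_hat_of_partition by (metis Max_facts(1) block_eq)
  ultimately show ?thesis unfolding star_forest_def by blast
qed

lemma partition_on_partition_of_hat:
  assumes "star_forest A S"
  shows "partition_on A (partition_of_hat A S)"
proof -
  define roots where "roots = {j \<in> A. \<forall>l. (j, l) \<notin> S}"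
  define block where "block j = insert j {i. (i, j) \<in> S}" for j
  have S: "\<And>i j. (i, j) \<in> S \<Longrightarrow> i \<in> A \<and> j \<in> A \<and> i < j"
    "\<And>i j l. (i, j) \<in> S \<Longrightarrow> (i, l) \<in> S \<Longrightarrow> j = l"
    "\<And>i j l. (i, j) \<in> S \<Longrightarrow> (j, l) \<notin> S"
    using assms unfolding star_forest_def by blast+
  have "partition_on A (block ` roots)"
  proof (rule partition_onI)
    show "\<Union> (block ` roots) = A"
    proof (intro equalityI subsetI)
      fix x assume "x \<in> \<Union> (block ` roots)"
      then show "x \<in> A" using S(1) by (auto simp: block_def roots_def)
    next
      fix x assume "x \<in> A"
      show "x \<in> \<Union> (block ` roots)"
      proof (cases "\<exists>l. (x, l) \<in> S")
        case True
        then obtain l where "(x, l) \<in> S" by blast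
        then have "l \<in> roots" "x \<in> block l" using S by (auto simp: roots_def block_def)
        then show ?thesis by blast
      next
        case False
        then have "x \<in> roots" "x \<in> block x" using \<open>x \<in> A\<close> by (auto simp: roots_def block_def)
        then show ?thesis by blast
      qed
    qed
  next
    fix p q assume "p \<in> block ` roots" "q \<in> block ` roots" "p \<noteq> q"
    then obtain j j' where "j \<in> roots" "j' \<in> roots" "j \<noteq> j'" "p = block j" "q = block j'"
      by blast
    then show "disjnt p q" using S(2) by (auto simp: disjnt_def block_def roots_def)
  next
    show "{} \<notin> block ` roots" by (auto simp: block_def)
  qed
  then show ?thesis by (simp add: partition_of_hat_def roots_def block_def)
qed

lemma hat_of_partition_of_hat:
  assumes "finite A" "star_forest A S"
  shows "hat_of_partition (partition_of_hat A S) = S"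
proof -
  define roots where "roots = {j \<in> A. \<forall>l. (j, l) \<notin> S}"
  define block where "block j = insert j {i. (i, j) \<in> S}" for j
  have S: "\<And>i j. (i, j) \<in> S \<Longrightarrow> i \<in> A \<and> j \<in> A \<and> i < j"
    "\<And>i j l. (i, j) \<in> S \<Longrightarrow> (j, l) \<notin> S"
    using assms(2) unfolding star_forest_def by blast+
  have Max_block: "Max (block j) = j" if "j \<in> A" for j
  proof (rule Max_eqI)
    show "finite (block j)"
      using S(1) that by (auto simp: block_def intro: finite_subset[OF _ assms(1)])
  qed (auto simp: block_def dest: S(1) intro: less_imp_le)
  have "hat_of_partition (block ` roots) = S"
  proof (intro equalityI subsetI)
    fix x assume "x \<in> hat_of_partition (block ` roots)"
    then obtain j i where "j \<in> roots" "i \<in> block j" "i \<noteq> Max (block j)" "x = (i, Max (block j))"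
      by (auto simp: hat_of_partition_def)
    then show "x \<in> S" using Max_block by (auto simp: roots_def block_def)
  next
    fix x assume "x \<in> S"
    then obtain i j where x: "x = (i, j)" "(i, j) \<in> S" by (cases x) auto
    then have "j \<in> roots" "i \<in> block j - {j}" using S by (auto simp: roots_def block_def)
    then show "x \<in> hat_of_partition (block ` roots)"
      unfolding x(1) mem_hat_of_partition using Max_block by (auto simp: roots_def)
  qed
  then show ?thesis by (simp add: partition_of_hat_def roots_def block_def)
qed

lemma partition_of_hat_of_partition:
  assumes "finite A" "partition_on A P"
  shows "partition_of_hat A (hat_of_partition P) = P"
proof -
  note Max_facts = partition_on_block_Max[OF assms]
  note Max_mem_iff = partition_on_Max_mem_iff[OF assms]
  have roots: "{j \<in> A. \<forall>l. (j, l) \<notin> hat_of_partition P} = Max ` P"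
  proof (intro equalityI subsetI)
    fix j assume j: "j \<in> {j \<in> A. \<forall>l. (j, l) \<notin> hat_of_partition P}"
    then obtain B where "B \<in> P" "j \<in> B" using partition_onD1[OF assms(2)] by blast
    then show "j \<in> Max ` P" using j by (auto simp: mem_hat_of_partition)
  qed (use Max_facts(1,3) Max_mem_iff in \<open>auto simp: mem_hat_of_partition\<close>)
  have "insert (Max B) {i. (i, Max B) \<in> hat_of_partition P} = B" if "B \<in> P" for B
    using that Max_facts(1) inj_on_Max_partition_on[OF assms]
    by (auto simp: mem_hat_of_partition inj_on_eq_iff)
  then show ?thesis by (simp add: partition_of_hat_def roots image_image)
qed

lemma card_hat_of_partition:
  assumes "finite A" "partition_on A P"
  shows "card (hat_of_partition P) + card P = card A"
proof -
  note Max_facts = partition_on_block_Max[OF assms]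
  note Max_mem_iff = partition_on_Max_mem_iff[OF assms]
  have "inj_on fst (hat_of_partition P)"
    using star_forest_hat_of_partition[OF assms] by (auto simp: inj_on_def star_forest_def)
  moreover have "fst ` hat_of_partition P = A - Max ` P"
  proof (intro equalityI subsetI)
    fix i assume "i \<in> A - Max ` P"
    moreover obtain B where "B \<in> P" "i \<in> B" using calculation partition_onD1[OF assms(2)] by blast
    ultimately show "i \<in> fst ` hat_of_partition P"
      by (auto simp: hat_of_partition_def image_iff)
  next
    fix i assume "i \<in> fst ` hat_of_partition P"
    then obtain B where "B \<in> P" "i \<in> B" "i \<noteq> Max B" by (force simp: hat_of_partition_def)
    then show "i \<in> A - Max ` P" using Max_facts(3) Max_mem_iff by blast
  qed
  ultimately have "card (hat_of_partition P) = card (A - Max ` P)"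
    by (metis card_image)
  moreover have "card (Max ` P) = card P"
    using inj_on_Max_partition_on[OF assms] by (rule card_image)
  moreover have "Max ` P \<subseteq> A" using Max_facts(1,3) by blast
  moreover have "card (Max ` P) \<le> card A" using calculation(3) assms(1) by (rule card_mono[rotated])
  ultimately show ?thesis
    using assms(1) by (simp add: card_Diff_subset finite_subset)
qed

lemma hat_adj_same_head: "j \<noteq> l \<Longrightarrow> hat_adj E (i, j) (i, l)"
  by (simp add: hat_adj_def hat_cond_def)

lemma hat_adj_consecutive: "i \<noteq> j \<Longrightarrow> j \<le> l \<Longrightarrow> hat_adj E (i, j) (j, l)"
  by (simp add: hat_adj_def hat_cond_def)

lemma hat_adj_same_tail: "i \<noteq> k \<Longrightarrow> \<not> E i k \<Longrightarrow> hat_adj E (i, j) (k, j)"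
  by (simp add: hat_adj_def hat_cond_def)

lemma star_forest_if_hat_independent:
  assumes "S \<subseteq> hat_V n E" "\<forall>x\<in>S. \<forall>y\<in>S. \<not> hat_adj E x y"
  shows "star_forest {1..n} S"
proof -
  have V: "1 \<le> i \<and> i < j \<and> j \<le> n" if "(i, j) \<in> S" for i j
    using assms(1) that by (auto simp: hat_V_def)
  show ?thesis unfolding star_forest_def
  proof (intro conjI allI impI subsetI)
    show "x \<in> {(i, j). i \<in> {1..n} \<and> j \<in> {1..n} \<and> i < j}" if "x \<in> S" for x
      using V that by (cases x) force
    show "j = l" if "(i, j) \<in> S" "(i, l) \<in> S" for i j l
      using hat_adj_same_head assms(2) that by blast
    show "(j, l) \<notin> S" if "(i, j) \<in> S" for i j l
      using hat_adj_consecutive[of i j l] V[of i j] V[of j l] assms(2) that by fastforce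
  qed
qed

lemma not_hat_cond_hat_of_partition:
  assumes "finite A" "partition_on A P" "\<forall>B\<in>P. \<forall>a\<in>B. \<forall>b\<in>B. a \<noteq> b \<longrightarrow> E a b"
    and "x \<in> hat_of_partition P" "y \<in> hat_of_partition P" "x \<noteq> y"
  shows "\<not> hat_cond E x y"
proof -
  note block_eq = partition_on_block_eq[OF assms(2)]
  note Max_mem_iff = partition_on_Max_mem_iff[OF assms(1,2)]
  obtain B i C k where B: "B \<in> P" "i \<in> B" "i \<noteq> Max B" "x = (i, Max B)"
    and C: "C \<in> P" "k \<in> C" "k \<noteq> Max C" "y = (k, Max C)"
    using assms(4,5) by (force simp: hat_of_partition_def)
  have "i \<noteq> k" using block_eq B C assms(6) by blast
  moreover have "Max B \<noteq> k" using Max_mem_iff B C by blast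
  moreover have "E i k" if "Max B = Max C"
    using that B C \<open>i \<noteq> k\<close> assms(3) inj_on_Max_partition_on[OF assms(1,2)]
    by (metis inj_on_eq_iff)
  ultimately show ?thesis using B(4) C(4) by (auto simp: hat_cond_def)
qed

lemma hat_independent_iff_clique_partition:
  assumes "symp E" "partition_on {1..n} P"
  shows "hat_of_partition P \<subseteq> hat_V n E \<and>
           (\<forall>x\<in>hat_of_partition P. \<forall>y\<in>hat_of_partition P. \<not> hat_adj E x y)
         \<longleftrightarrow> (\<forall>B\<in>P. \<forall>a\<in>B. \<forall>b\<in>B. a \<noteq> b \<longrightarrow> E a b)"
proof
  assume hat: "hat_of_partition P \<subseteq> hat_V n E \<and>
           (\<forall>x\<in>hat_of_partition P. \<forall>y\<in>hat_of_partition P. \<not> hat_adj E x y)"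
  have edge_to_Max: "E a (Max B)" if "B \<in> P" "a \<in> B" "a \<noteq> Max B" for a B
  proof -
    have "(a, Max B) \<in> hat_of_partition P" using that by (auto simp: mem_hat_of_partition)
    then have "(a, Max B) \<in> hat_V n E" using hat by blast
    then show ?thesis by (simp add: hat_V_def)
  qed
  show "\<forall>B\<in>P. \<forall>a\<in>B. \<forall>b\<in>B. a \<noteq> b \<longrightarrow> E a b"
  proof (intro ballI impI)
    fix B a b assume "B \<in> P" "a \<in> B" "b \<in> B" "a \<noteq> b"
    consider "a = Max B" | "b = Max B" | "a \<noteq> Max B" "b \<noteq> Max B" by blast
    then show "E a b"
    proof cases
      case 1
      then show ?thesis using edge_to_Max[of B b] \<open>B \<in> P\<close> \<open>b \<in> B\<close> \<open>a \<noteq> b\<close> assms(1)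
        by (metis sympD)
    next
      case 2
      then show ?thesis using edge_to_Max \<open>B \<in> P\<close> \<open>a \<in> B\<close> \<open>a \<noteq> b\<close> by blast
    next
      case 3
      then have "(a, Max B) \<in> hat_of_partition P" "(b, Max B) \<in> hat_of_partition P"
        using \<open>B \<in> P\<close> \<open>a \<in> B\<close> \<open>b \<in> B\<close> by (auto simp: mem_hat_of_partition)
      then show ?thesis using hat hat_adj_same_tail \<open>a \<noteq> b\<close> by blast
    qed
  qed
next
  assume cliques: "\<forall>B\<in>P. \<forall>a\<in>B. \<forall>b\<in>B. a \<noteq> b \<longrightarrow> E a b"
  have "hat_of_partition P \<subseteq> hat_V n E"
  proof
    fix x assume x: "x \<in> hat_of_partition P"
    then obtain B i where B: "B \<in> P" "i \<in> B" "i \<noteq> Max B" "x = (i, Max B)"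
      by (force simp: hat_of_partition_def)
    have "1 \<le> i \<and> i < Max B \<and> Max B \<le> n"
      using star_forest_hat_of_partition[OF finite_atLeastAtMost assms(2)] x B(4) by (auto simp: star_forest_def)
    moreover have "E i (Max B)"
      using cliques partition_on_block_Max(1)[OF finite_atLeastAtMost assms(2) B(1)] B by auto
    ultimately show "x \<in> hat_V n E" using B(4) by (simp add: hat_V_def)
  qed
  moreover have "\<not> hat_adj E x y" if "x \<in> hat_of_partition P" "y \<in> hat_of_partition P" for x y
    using not_hat_cond_hat_of_partition[OF finite_atLeastAtMost assms(2) cliques, of x y]
      not_hat_cond_hat_of_partition[OF finite_atLeastAtMost assms(2) cliques, of y x] that
    unfolding hat_adj_def by auto
  ultimately show "hat_of_partition P \<subseteq> hat_V n E \<and>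
           (\<forall>x\<in>hat_of_partition P. \<forall>y\<in>hat_of_partition P. \<not> hat_adj E x y)" by blast
qed

lemma bij_betw_clique_partitions_hat_indep_sets:
  assumes "symp E" "m \<le> n"
  shows "bij_betw hat_of_partition (clique_partitions n E (n - m))
           (indep_sets (hat_V n E) (hat_adj E) m)"
proof (rule bij_betw_byWitness[where f' = "partition_of_hat {1..n}"])
  show "\<forall>P\<in>clique_partitions n E (n - m). partition_of_hat {1..n} (hat_of_partition P) = P"
    using partition_of_hat_of_partition[OF finite_atLeastAtMost]
    by (auto simp: clique_partitions_def)
  show "\<forall>S\<in>indep_sets (hat_V n E) (hat_adj E) m. hat_of_partition (partition_of_hat {1..n} S) = S"
    using hat_of_partition_of_hat[OF finite_atLeastAtMost star_forest_if_hat_independent]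
    by (auto simp: indep_sets_def)
  show "hat_of_partition ` clique_partitions n E (n - m) \<subseteq> indep_sets (hat_V n E) (hat_adj E) m"
  proof
    fix S assume "S \<in> hat_of_partition ` clique_partitions n E (n - m)"
    then obtain P where P: "partition_on {1..n} P" "card P = n - m"
      "\<forall>B\<in>P. \<forall>a\<in>B. \<forall>b\<in>B. a \<noteq> b \<longrightarrow> E a b" "S = hat_of_partition P"
      by (auto simp: clique_partitions_def)
    have "card S = m"
      using card_hat_of_partition[OF finite_atLeastAtMost P(1)] P(2,4) assms(2) by simp
    then show "S \<in> indep_sets (hat_V n E) (hat_adj E) m"
      using hat_independent_iff_clique_partition[OF assms(1) P(1)] P(3,4)
      by (simp add: indep_sets_def)
  qed
  show "partition_of_hat {1..n} ` indep_sets (hat_V n E) (hat_adj E) m \<subseteq> clique_partitions n E (n - m)"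
  proof
    fix P assume "P \<in> partition_of_hat {1..n} ` indep_sets (hat_V n E) (hat_adj E) m"
    then obtain S where S: "S \<subseteq> hat_V n E" "\<forall>x\<in>S. \<forall>y\<in>S. \<not> hat_adj E x y" "card S = m"
      "P = partition_of_hat {1..n} S"
      by (auto simp: indep_sets_def)
    have forest: "star_forest {1..n} S" using star_forest_if_hat_independent[OF S(1,2)] .
    have P_part: "partition_on {1..n} P"
      using partition_on_partition_of_hat[OF forest] S(4) by simp
    have S_eq: "hat_of_partition P = S"
      using hat_of_partition_of_hat[OF finite_atLeastAtMost forest] S(4) by simp
    have "card P = n - m"
      using card_hat_of_partition[OF finite_atLeastAtMost P_part] S_eq S(3) by simp
    then show "P \<in> clique_partitions n E (n - m)"
      using hat_independent_iff_clique_partition[OF assms(1) P_part] P_part S_eq S(1,2)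
      by (simp add: clique_partitions_def)
  qed
qed

lemma hat_indep_sets_eq_empty:
  assumes "1 \<le> n" "n \<le> m"
  shows "indep_sets (hat_V n E) (hat_adj E) m = {}"
proof -
  have "card S < n" if "S \<subseteq> hat_V n E" "\<forall>x\<in>S. \<forall>y\<in>S. \<not> hat_adj E x y" for S
  proof -
    have forest: "star_forest {1..n} S" using star_forest_if_hat_independent[OF that] .
    define P where "P = partition_of_hat {1..n} S"
    have P_part: "partition_on {1..n} P"
      unfolding P_def by (rule partition_on_partition_of_hat[OF forest])
    have "card S + card P = n"
      using card_hat_of_partition[OF finite_atLeastAtMost P_part]
        hat_of_partition_of_hat[OF finite_atLeastAtMost forest] by (simp add: P_def)
    moreover have "P \<noteq> {}" using partition_onD1[OF P_part] assms(1) by auto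
    then have "card P \<noteq> 0" using finite_elements[OF finite_atLeastAtMost P_part] by simp
    ultimately show ?thesis by linarith
  qed
  then show ?thesis using assms(2) by (fastforce simp: indep_sets_def)
qed

lemma coeff_h_star:
  "coeff (h_star n E) m = (if m < n then (-1) ^ m * int (a_coeff n E (n - m)) else 0)"
  by (simp add: h_star_def coeff_sum coeff_monom sum.delta)

lemma coeff_indep_poly:
  assumes "finite V"
  shows "coeff (indep_poly V A) m = (-1) ^ m * int (card (indep_sets V A m))"
proof -
  have "indep_sets V A m = {}" if "card V < m"
    using that card_mono[OF assms] by (fastforce simp: indep_sets_def)
  then show ?thesis by (auto simp: indep_poly_def coeff_sum coeff_monom sum.delta)
qed

lemma finite_hat_V: "finite (hat_V n E)"
  by (rule finite_subset[of _ "{1..n} \<times> {1..n}"]) (auto simp: hat_V_def)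

theorem h_star_eq_indep_poly_hat:
  assumes "symp E" "1 \<le> n"
  shows "h_star n E = indep_poly (hat_V n E) (hat_adj E)"
proof (rule poly_eqI)
  fix m
  show "coeff (h_star n E) m = coeff (indep_poly (hat_V n E) (hat_adj E)) m"
  proof (cases "m < n")
    case True
    then show ?thesis
      using bij_betw_same_card[OF bij_betw_clique_partitions_hat_indep_sets[OF assms(1), of m n]]
      by (simp add: coeff_h_star coeff_indep_poly[OF finite_hat_V] a_coeff_def)
  next
    case False
    then show ?thesis
      by (simp add: coeff_h_star coeff_indep_poly[OF finite_hat_V] hat_indep_sets_eq_empty[OF assms(2)])
  qed
qed

lemma hat_V_del_edge_subset: "hat_V n (del_edge E a b) \<subseteq> hat_V n E"
  by (auto simp: hat_V_def del_edge_def)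

lemma hat_adj_del_edge_last:
  assumes "p \<in> hat_V n (del_edge E a n)" "q \<in> hat_V n (del_edge E a n)"
    and "hat_adj (del_edge E a n) p q"
  shows "hat_adj E p q"
proof -
  obtain i j k l where pq: "p = (i, j)" "q = (k, l)" by (cases p, cases q)
  have "i < j" "k < l" "j \<le> n" "l \<le> n" using assms(1,2) pq by (auto simp: hat_V_def)
  then have "{i, k} \<noteq> {a, n}" "{k, i} \<noteq> {a, n}" if "j = l"
    using that by (auto simp: doubleton_eq_iff)
  then show ?thesis
    using assms(3) unfolding pq hat_adj_def hat_cond_def del_edge_def by (auto split: if_splits)
qed

theorem proposition2:
  fixes n :: nat and E :: "nat \<Rightarrow> nat \<Rightarrow> bool"
  assumes "simple_graph n E" and "n \<ge> 1"
  shows "h_star n E = indep_poly (hat_V n E) (hat_adj E) \<and>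
         (E (n - 1) n \<longrightarrow>
           hat_V n (del_edge E (n - 1) n) \<subseteq> hat_V n E \<and>
           (\<forall>p\<in>hat_V n (del_edge E (n - 1) n). \<forall>q\<in>hat_V n (del_edge E (n - 1) n).
              hat_adj (del_edge E (n - 1) n) p q \<longrightarrow> hat_adj E p q))"
proof -
  have "symp E" using assms(1) by (auto simp: simple_graph_def symp_def)
  then show ?thesis
    using h_star_eq_indep_poly_hat assms(2) hat_V_del_edge_subset hat_adj_del_edge_last by blast
qed

end
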